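(* Let $\alpha\in(1,\infty)$, let $p_{Y\mid X}$ be a channel between finite sets $\mathcal X,\mathcal Y$, and for a distribution $p_X$ on $\mathcal X$, a joint distribution $\tilde q_{X,Y}$ on $\mathcal X\times\mathcal Y$ with $X$-marginal $\tilde q_X$, and a reverse channel $r_{X\mid Y}$, define $$\tilde F_\alpha^{\mathrm{S3}}(p_X,\tilde q_{X,Y},r_{X\mid Y}):=\frac{\alpha}{1-\alpha}D(\tilde q_{X,Y}\|\tilde q_Xp_{Y\mid X})+\mathbb E^{\tilde q_{X,Y}}\!\left[\log\frac{r_{X\mid Y}(X\mid Y)}{\tilde q_X(X)}\right]+\frac{1}{1-\alpha}D(\tilde q_X\|p_X).$$ Then: (1) for fixed $(p_X,\tilde q_{X,Y})$, $\tilde F_\alpha^{\mathrm{S3}}$ is maximized over $r_{X\mid Y}$ by $r^*_{X\mid Y}(x\mid y)=\tilde q_{X,Y}(x,y)/\sum_{x'}\tilde q_{X,Y}(x',y)$; (2) for fixed $(\tilde q_{X,Y},r_{X\mid Y})$, it is maximized over $p_X$ by $p_X^*(x)=\sum_y\tilde q_{X,Y}(x,y)$; (3) for fixed $(p_X,r_{X\mid Y})$, it is maximized over $\tilde q_{X,Y}$ by $$\tilde q^*_{X,Y}(x,y)=\frac{p_X(x)^{1/\alpha}p_{Y\mid X}(y\mid x)r_{X\mid Y}(x\mid y)^{1-1/\alpha}}{\sum_{x',y'}p_X(x')^{1/\alpha}p_{Y\mid X}(y'\mid x')r_{X\mid Y}(x'\mid y')^{1-1/\alpha}}.$$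
   Context: $\log$ is natural and $D$ is the Kullback–Leibler divergence. A reverse channel $r_{X\mid Y}$ is a family $\{r_{X\mid Y}(\cdot\mid y)\}_{y\in\mathcal Y}$ of distributions on $\mathcal X$. *)

theory Defs
  imports "HOL-Analysis.Analysis" "HOL-Library.Extended_Real"
begin

definition distr :: "('a::finite \<Rightarrow> real) \<Rightarrow> bool" where
  "distr p \<longleftrightarrow> (\<forall>a. 0 \<le> p a) \<and> (\<Sum>a\<in>UNIV. p a) = 1"

text \<open>Channel p_{Y|X}: W x y = p_{Y|X}(y|x).\<close>
definition channel :: "('x::finite \<Rightarrow> 'y::finite \<Rightarrow> real) \<Rightarrow> bool" where
  "channel W \<longleftrightarrow> (\<forall>x. distr (W x))"

text \<open>Reverse channel r_{X|Y}: r y x = r_{X|Y}(x|y).\<close>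
definition rev_channel :: "('y::finite \<Rightarrow> 'x::finite \<Rightarrow> real) \<Rightarrow> bool" where
  "rev_channel r \<longleftrightarrow> (\<forall>y. distr (r y))"

definition xmarg :: "('x::finite \<times> 'y::finite \<Rightarrow> real) \<Rightarrow> 'x \<Rightarrow> real" where
  "xmarg q x = (\<Sum>y\<in>UNIV. q (x, y))"

definition ymarg :: "('x::finite \<times> 'y::finite \<Rightarrow> real) \<Rightarrow> 'y \<Rightarrow> real" where
  "ymarg q y = (\<Sum>x\<in>UNIV. q (x, y))"

definition KL :: "('a::finite \<Rightarrow> real) \<Rightarrow> ('a \<Rightarrow> real) \<Rightarrow> ereal" where
  "KL p q = (\<Sum>a\<in>UNIV. if p a = 0 then 0
                        else if q a = 0 then \<infinity>
                        else ereal (p a * ln (p a / q a)))"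

definition exp_log_term :: "('x::finite \<times> 'y::finite \<Rightarrow> real) \<Rightarrow> ('y \<Rightarrow> 'x \<Rightarrow> real) \<Rightarrow> ereal" where
  "exp_log_term q r = (\<Sum>xy\<in>UNIV. case xy of (x, y) \<Rightarrow>
      if q (x, y) = 0 then 0
      else if r y x = 0 then -\<infinity>
      else ereal (q (x, y) * ln (r y x / xmarg q x)))"

definition F_S3 :: "real \<Rightarrow> ('x::finite \<Rightarrow> 'y::finite \<Rightarrow> real) \<Rightarrow> ('x \<Rightarrow> real)
                     \<Rightarrow> ('x \<times> 'y \<Rightarrow> real) \<Rightarrow> ('y \<Rightarrow> 'x \<Rightarrow> real) \<Rightarrow> ereal" where
  "F_S3 \<alpha> W p q r =
     ereal (\<alpha> / (1 - \<alpha>)) * KL q (\<lambda>(x, y). xmarg q x * W x y)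
     + exp_log_term q r
     + ereal (1 / (1 - \<alpha>)) * KL (xmarg q) p"

definition Z3 :: "real \<Rightarrow> ('x::finite \<Rightarrow> 'y::finite \<Rightarrow> real) \<Rightarrow> ('x \<Rightarrow> real)
                   \<Rightarrow> ('y \<Rightarrow> 'x \<Rightarrow> real) \<Rightarrow> real" where
  "Z3 \<alpha> W p r = (\<Sum>x'\<in>UNIV. \<Sum>y'\<in>UNIV.
       p x' powr (1 / \<alpha>) * W x' y' * r y' x' powr (1 - 1 / \<alpha>))"

definition q_star :: "real \<Rightarrow> ('x::finite \<Rightarrow> 'y::finite \<Rightarrow> real) \<Rightarrow> ('x \<Rightarrow> real)
                   \<Rightarrow> ('y \<Rightarrow> 'x \<Rightarrow> real) \<Rightarrow> 'x \<times> 'y \<Rightarrow> real" where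
  "q_star \<alpha> W p r = (\<lambda>(x, y).
       p x powr (1 / \<alpha>) * W x y * r y x powr (1 - 1 / \<alpha>) / Z3 \<alpha> W p r)"

end

theory Submission
  imports Defs
begin

(*
  For \<alpha> > 1 both weights \<alpha>/(1-\<alpha>) and 1/(1-\<alpha>) are negative, so F_S3 is -\<infinity> unless q is
  absolutely continuous with respect to p(x) W(y|x) r(x|y), and a real number otherwise.  Each part
  then reduces to Gibbs' inequality D \<ge> 0: replacing r by the posterior r* raises the expectation
  term by D(q || q_Y r); replacing p by q_X removes the term D(q_X || p)/(1-\<alpha>) \<le> 0; and with the
  tilted weight g = p^(1/\<alpha>) W r^(1-1/\<alpha>) and Z = \<Sum> g one has
  F_S3 = \<alpha>/(1-\<alpha>) (D(q || g/Z) - log Z), which is largest at q = g/Z.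
*)

lemma sum_ereal_neq_MInfty:
  fixes f :: "'a \<Rightarrow> ereal"
  assumes "\<And>i. i \<in> A \<Longrightarrow> f i \<noteq> -\<infinity>"
  shows "sum f A \<noteq> -\<infinity>"
proof (cases "finite A")
  case True
  then show ?thesis using assms by (induction A rule: finite_induct) auto
qed simp

lemma sum_ereal_eq_MInfty:
  fixes f :: "'a \<Rightarrow> ereal"
  assumes "finite A" "\<And>j. j \<in> A \<Longrightarrow> f j \<noteq> \<infinity>" "i \<in> A" "f i = -\<infinity>"
  shows "sum f A = -\<infinity>"
proof -
  have "sum f (A - {i}) \<noteq> \<infinity>" using assms(1,2) by (simp add: sum_Pinfty)
  then show ?thesis using sum.remove[OF assms(1,3), of f] assms(4) by simp
qed

lemma ereal_add3_eq_MInfty: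
  fixes a b c :: ereal
  assumes "a \<noteq> \<infinity>" "b \<noteq> \<infinity>" "c \<noteq> \<infinity>" "a = -\<infinity> \<or> b = -\<infinity> \<or> c = -\<infinity>"
  shows "a + b + c = -\<infinity>"
  using assms by (cases a; cases b; cases c) auto

lemma sum_UNIV_pairs: "(\<Sum>z\<in>UNIV. f z) = (\<Sum>x\<in>UNIV. \<Sum>y\<in>UNIV. f (x, y))"
  by (metis UNIV_Times_UNIV sum.cartesian_product')

(* Since 0 * ln _ = 0, the convention 0 log (0/q) = 0 needs no case split. *)
definition KL_real :: "('a::finite \<Rightarrow> real) \<Rightarrow> ('a \<Rightarrow> real) \<Rightarrow> real" where
  "KL_real p q = (\<Sum>a\<in>UNIV. p a * ln (p a / q a))"

lemma KL_eq_KL_real: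
  assumes "\<And>a. q a = 0 \<Longrightarrow> p a = 0"
  shows "KL p q = ereal (KL_real p q)"
  unfolding KL_def KL_real_def sum_ereal[symmetric] using assms by (intro sum.cong) auto

lemma KL_eq_PInfty: "p a \<noteq> 0 \<Longrightarrow> q a = 0 \<Longrightarrow> KL p q = \<infinity>"
  unfolding KL_def sum_Pinfty by (auto intro!: bexI[of _ a])

lemma KL_neq_MInfty: "KL p q \<noteq> -\<infinity>"
  unfolding KL_def by (rule sum_ereal_neq_MInfty) auto

lemma KL_real_nonneg:
  assumes "distr p" "distr q" "\<And>a. q a = 0 \<Longrightarrow> p a = 0"
  shows "0 \<le> KL_real p q"
proof -
  have p0: "0 \<le> p a" and q0: "0 \<le> q a" for a using assms(1,2) unfolding distr_def by auto
  have "p a - q a \<le> p a * ln (p a / q a)" for a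
  proof (cases "p a = 0")
    case False
    then have "0 < p a" "0 < q a" using p0 q0 assms(3) by (auto simp: less_le)
    then have "p a * ln (q a / p a) \<le> p a * (q a / p a - 1)"
      by (intro mult_left_mono ln_le_minus_one) auto
    moreover have "p a * ln (p a / q a) = - (p a * ln (q a / p a))"
      using \<open>0 < p a\<close> \<open>0 < q a\<close> by (simp add: ln_div algebra_simps)
    moreover have "p a * (q a / p a - 1) = q a - p a" using \<open>0 < p a\<close> by (simp add: field_simps)
    ultimately show ?thesis by linarith
  qed (simp add: q0)
  then have "(\<Sum>a\<in>UNIV. p a - q a) \<le> KL_real p q" unfolding KL_real_def by (rule sum_mono)
  with assms(1,2) show ?thesis by (simp add: sum_subtractf distr_def)
qed

lemma KL_real_self: "KL_real p p = 0"
  unfolding KL_real_def by (intro sum.neutral) simp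

lemma KL_real_divide:
  assumes "0 < c" "\<And>a. p a \<noteq> 0 \<Longrightarrow> 0 < p a \<and> 0 < q a"
  shows "KL_real p (\<lambda>a. q a / c) = KL_real p q + ln c * (\<Sum>a\<in>UNIV. p a)"
  unfolding KL_real_def sum_distrib_left sum.distrib[symmetric]
proof (intro sum.cong refl)
  fix a
  show "p a * ln (p a / (q a / c)) = p a * ln (p a / q a) + ln c * p a"
  proof (cases "p a = 0")
    case False
    then have "0 < p a" "0 < q a" using assms(2) by auto
    with \<open>0 < c\<close> show ?thesis by (simp add: ln_div ln_mult algebra_simps)
  qed simp
qed

definition exp_log_real :: "('x::finite \<times> 'y::finite \<Rightarrow> real) \<Rightarrow> ('y \<Rightarrow> 'x \<Rightarrow> real) \<Rightarrow> real" where
  "exp_log_real q r = (\<Sum>(x, y)\<in>UNIV. q (x, y) * ln (r y x / xmarg q x))"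

lemma exp_log_term_eq_exp_log_real:
  assumes "\<And>x y. q (x, y) \<noteq> 0 \<Longrightarrow> r y x \<noteq> 0"
  shows "exp_log_term q r = ereal (exp_log_real q r)"
  unfolding exp_log_term_def exp_log_real_def sum_ereal[symmetric] using assms
  by (intro sum.cong) auto

lemma exp_log_term_eq_MInfty: "q (x, y) \<noteq> 0 \<Longrightarrow> r y x = 0 \<Longrightarrow> exp_log_term q r = -\<infinity>"
  unfolding exp_log_term_def
  by (rule sum_ereal_eq_MInfty[where i = "(x, y)"]) (auto split: if_splits)

lemma exp_log_term_neq_PInfty: "exp_log_term q r \<noteq> \<infinity>"
  unfolding exp_log_term_def sum_Pinfty by auto

lemma xmarg_pos:
  assumes "distr q" "q (x, y) \<noteq> 0"
  shows "0 < xmarg q x"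
proof -
  have "q (x, y) \<le> xmarg q x"
    unfolding xmarg_def using assms(1) unfolding distr_def
    by (intro member_le_sum[where f = "\<lambda>y. q (x, y)", simplified]) auto
  moreover have "0 < q (x, y)"
    using assms unfolding distr_def by (auto intro: order.not_eq_order_implies_strict)
  ultimately show ?thesis by linarith
qed

lemma ymarg_pos:
  assumes "distr q" "q (x, y) \<noteq> 0"
  shows "0 < ymarg q y"
proof -
  have "q (x, y) \<le> ymarg q y"
    unfolding ymarg_def using assms(1) unfolding distr_def
    by (intro member_le_sum[where f = "\<lambda>x. q (x, y)", simplified]) auto
  moreover have "0 < q (x, y)"
    using assms unfolding distr_def by (auto intro: order.not_eq_order_implies_strict)
  ultimately show ?thesis by linarith
qed

lemma distr_xmarg: "distr q \<Longrightarrow> distr (xmarg q)"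
  unfolding distr_def xmarg_def sum_UNIV_pairs[of q] by (simp add: sum_nonneg)

lemma KL_real_xmarg:
  "KL_real (xmarg q) p = (\<Sum>(x, y)\<in>UNIV. q (x, y) * ln (xmarg q x / p x))"
  unfolding KL_real_def sum_UNIV_pairs[of "\<lambda>(x, y). q (x, y) * ln (xmarg q x / p x)"]
  by (simp add: xmarg_def sum_distrib_right)

lemma sum_ymarg: "(\<Sum>y\<in>UNIV. ymarg q y) = (\<Sum>z\<in>UNIV. q z)"
  unfolding ymarg_def sum_UNIV_pairs[of q] by (rule sum.swap)

lemma distr_ymarg_times_rev_channel:
  assumes "distr q" "rev_channel r"
  shows "distr (\<lambda>(x, y). ymarg q y * r y x)"
proof -
  have "(\<Sum>(x, y)\<in>UNIV. ymarg q y * r y x) = (\<Sum>x\<in>UNIV. \<Sum>y\<in>UNIV. ymarg q y * r y x)"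
    by (simp add: sum_UNIV_pairs)
  also have "\<dots> = (\<Sum>y\<in>UNIV. ymarg q y * (\<Sum>x\<in>UNIV. r y x))"
    unfolding sum_distrib_left by (rule sum.swap)
  also have "\<dots> = 1"
    using assms by (simp add: sum_ymarg rev_channel_def distr_def)
  finally have "(\<Sum>(x, y)\<in>UNIV. ymarg q y * r y x) = 1" .
  moreover have "0 \<le> ymarg q y" "0 \<le> r y x" for x y
    using assms unfolding ymarg_def rev_channel_def distr_def by (auto intro: sum_nonneg)
  ultimately show ?thesis unfolding distr_def by auto
qed

definition abs_cont :: "('x \<Rightarrow> 'y \<Rightarrow> real) \<Rightarrow> ('x \<Rightarrow> real) \<Rightarrow> ('x \<times> 'y \<Rightarrow> real)
                        \<Rightarrow> ('y \<Rightarrow> 'x \<Rightarrow> real) \<Rightarrow> bool" where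
  "abs_cont W p q r \<longleftrightarrow> (\<forall>x y. q (x, y) \<noteq> 0 \<longrightarrow> p x \<noteq> 0 \<and> W x y \<noteq> 0 \<and> r y x \<noteq> 0)"

lemma F_S3_eq_MInfty:
  assumes "1 < \<alpha>" "distr q" "\<not> abs_cont W p q r"
  shows "F_S3 \<alpha> W p q r = -\<infinity>"
proof -
  obtain x y where qxy: "q (x, y) \<noteq> 0" and "p x = 0 \<or> W x y = 0 \<or> r y x = 0"
    using assms(3) unfolding abs_cont_def by blast
  moreover have "xmarg q x \<noteq> 0" using xmarg_pos[OF assms(2) qxy] by simp
  ultimately have "KL (xmarg q) p = \<infinity> \<or> KL q (\<lambda>(x, y). xmarg q x * W x y) = \<infinity>
      \<or> exp_log_term q r = -\<infinity>"
    using KL_eq_PInfty[of q "(x, y)"] KL_eq_PInfty[of "xmarg q" x] exp_log_term_eq_MInfty[of q x y r]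
    by auto
  moreover have neg: "\<alpha> / (1 - \<alpha>) < 0" "1 / (1 - \<alpha>) < 0"
    using assms(1) by (auto simp: divide_pos_neg)
  ultimately have "ereal (\<alpha> / (1 - \<alpha>)) * KL q (\<lambda>(x, y). xmarg q x * W x y) = -\<infinity>
      \<or> exp_log_term q r = -\<infinity> \<or> ereal (1 / (1 - \<alpha>)) * KL (xmarg q) p = -\<infinity>"
    by auto
  moreover have neg_KL: "ereal c * KL p' q' \<noteq> \<infinity>" if "c < 0" for c and p' q' :: "'c::finite \<Rightarrow> real"
    using that KL_neq_MInfty[of p' q'] by (cases "KL p' q'") auto
  ultimately show ?thesis
    unfolding F_S3_def by (intro ereal_add3_eq_MInfty neg_KL neg exp_log_term_neq_PInfty)
qed

lemma F_S3_eq_real: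
  assumes "distr q" "abs_cont W p q r"
  shows "F_S3 \<alpha> W p q r = ereal (\<alpha> / (1 - \<alpha>) * KL_real q (\<lambda>(x, y). xmarg q x * W x y)
                                + exp_log_real q r + 1 / (1 - \<alpha>) * KL_real (xmarg q) p)"
proof -
  have "KL q (\<lambda>(x, y). xmarg q x * W x y) = ereal (KL_real q (\<lambda>(x, y). xmarg q x * W x y))"
    using assms xmarg_pos unfolding abs_cont_def
    by (intro KL_eq_KL_real) (fastforce split: prod.splits)
  moreover have "KL (xmarg q) p = ereal (KL_real (xmarg q) p)"
    using assms unfolding abs_cont_def xmarg_def by (intro KL_eq_KL_real) (metis sum.neutral)
  moreover have "exp_log_term q r = ereal (exp_log_real q r)"
    using assms unfolding abs_cont_def by (intro exp_log_term_eq_exp_log_real) auto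
  ultimately show ?thesis unfolding F_S3_def by simp
qed

lemma exp_log_real_le_posterior:
  assumes "distr q" "rev_channel r" and supp: "\<And>x y. q (x, y) \<noteq> 0 \<Longrightarrow> r y x \<noteq> 0"
    and rstar: "\<And>x y. 0 < ymarg q y \<Longrightarrow> rstar y x = q (x, y) / ymarg q y"
  shows "exp_log_real q r \<le> exp_log_real q rstar"
proof -
  define s where "s = (\<lambda>(x, y). ymarg q y * r y x)"
  have r0: "0 \<le> r y x" for x y using assms(2) unfolding rev_channel_def distr_def by auto
  have pointwise: "q (x, y) * ln (rstar y x / xmarg q x) - q (x, y) * ln (r y x / xmarg q x)
      = q (x, y) * ln (q (x, y) / s (x, y))" for x y
  proof (cases "q (x, y) = 0")
    case False
    then have "0 < q (x, y)" "0 < xmarg q x" "0 < ymarg q y" "0 < r y x"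
      using assms(1) supp[OF False] r0[of y x] xmarg_pos[OF assms(1) False] ymarg_pos[OF assms(1) False]
      by (auto simp: distr_def less_le)
    then show ?thesis using rstar by (simp add: s_def ln_div ln_mult algebra_simps)
  qed simp
  have "0 \<le> KL_real q s"
  proof (rule KL_real_nonneg)
    show "distr s" unfolding s_def using assms(1,2) by (rule distr_ymarg_times_rev_channel)
    show "q z = 0" if "s z = 0" for z
      using that supp ymarg_pos[OF assms(1)] by (cases z) (force simp: s_def)
  qed fact
  also have "KL_real q s = exp_log_real q rstar - exp_log_real q r"
    unfolding exp_log_real_def KL_real_def sum_subtractf[symmetric]
    by (intro sum.cong) (auto simp: pointwise)
  finally show ?thesis by simp
qed

lemma F_S3_le_posterior:
  assumes "1 < \<alpha>" "distr q" "rev_channel r"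
    and rstar: "\<And>x y. 0 < ymarg q y \<Longrightarrow> rstar y x = q (x, y) / ymarg q y"
  shows "F_S3 \<alpha> W p q r \<le> F_S3 \<alpha> W p q rstar"
proof (cases "abs_cont W p q r")
  case True
  have "abs_cont W p q rstar"
    using True rstar ymarg_pos[OF assms(2)] unfolding abs_cont_def by (metis divide_eq_0_iff less_irrefl)
  moreover have "exp_log_real q r \<le> exp_log_real q rstar"
    using True unfolding abs_cont_def by (intro exp_log_real_le_posterior[OF assms(2,3) _ rstar]) auto
  ultimately show ?thesis using F_S3_eq_real[OF assms(2)] True by simp
qed (simp add: F_S3_eq_MInfty assms)

lemma F_S3_le_xmarg:
  assumes "1 < \<alpha>" "distr p" "distr q"
  shows "F_S3 \<alpha> W p q r \<le> F_S3 \<alpha> W (xmarg q) q r"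
proof (cases "abs_cont W p q r")
  case True
  have "abs_cont W (xmarg q) q r"
    using True xmarg_pos[OF assms(3)] unfolding abs_cont_def by force
  moreover have "0 \<le> KL_real (xmarg q) p"
    using True assms(2,3) unfolding abs_cont_def
    by (intro KL_real_nonneg distr_xmarg) (auto simp: xmarg_def intro: sum.neutral)
  then have "1 / (1 - \<alpha>) * KL_real (xmarg q) p \<le> 0"
    using assms(1) by (intro mult_nonpos_nonneg) auto
  ultimately show ?thesis
    using True F_S3_eq_real[OF assms(3)] by (simp add: KL_real_self)
qed (simp add: F_S3_eq_MInfty assms)

definition tilt :: "real \<Rightarrow> ('x \<Rightarrow> 'y \<Rightarrow> real) \<Rightarrow> ('x \<Rightarrow> real) \<Rightarrow> ('y \<Rightarrow> 'x \<Rightarrow> real)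
                    \<Rightarrow> 'x \<times> 'y \<Rightarrow> real" where
  "tilt \<alpha> W p r = (\<lambda>(x, y). p x powr (1 / \<alpha>) * W x y * r y x powr (1 - 1 / \<alpha>))"

lemma ln_tilt_identity:
  fixes \<alpha> Q X V R P :: real
  assumes "\<alpha> \<noteq> 0" "\<alpha> \<noteq> 1" "0 < Q" "0 < X" "0 < V" "0 < R" "0 < P"
  shows "\<alpha> / (1 - \<alpha>) * ln (Q / (X * V)) + ln (R / X) + 1 / (1 - \<alpha>) * ln (X / P)
       = \<alpha> / (1 - \<alpha>) * ln (Q / (P powr (1 / \<alpha>) * V * R powr (1 - 1 / \<alpha>)))"
proof -
  define k c1 c2 where "k = \<alpha> / (1 - \<alpha>)" and "c1 = 1 / \<alpha>" and "c2 = 1 - 1 / \<alpha>"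
  have coeffs: "1 / (1 - \<alpha>) = k + 1" "k * c1 = k + 1" "k * c2 = -1"
    using assms(1,2) unfolding k_def c1_def c2_def by (simp_all add: field_simps)
  have "k * ln (Q / (P powr c1 * V * R powr c2)) = k * (ln Q - (c1 * ln P + ln V + c2 * ln R))"
    using assms by (simp add: ln_div ln_mult ln_powr)
  also have "\<dots> = k * ln Q - (k * c1) * ln P - k * ln V - (k * c2) * ln R"
    by (simp add: algebra_simps)
  also have "\<dots> = k * ln (Q / (X * V)) + ln (R / X) + (k + 1) * ln (X / P)"
    using assms unfolding coeffs by (simp add: ln_div ln_mult algebra_simps)
  finally show ?thesis unfolding k_def c1_def c2_def coeffs(1) by simp
qed

lemma tilt_eq_0_iff: "tilt \<alpha> W p r (x, y) = 0 \<longleftrightarrow> p x = 0 \<or> W x y = 0 \<or> r y x = 0"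
  by (simp add: tilt_def)

lemma tilt_nonneg:
  assumes "channel W" "distr p" "rev_channel r"
  shows "0 \<le> tilt \<alpha> W p r z"
  using assms unfolding tilt_def channel_def rev_channel_def distr_def by (auto split: prod.split)

lemma q_star_eq_tilt: "q_star \<alpha> W p r = (\<lambda>z. tilt \<alpha> W p r z / Z3 \<alpha> W p r)"
  by (simp add: q_star_def tilt_def fun_eq_iff)

lemma Z3_eq_sum_tilt: "Z3 \<alpha> W p r = (\<Sum>z\<in>UNIV. tilt \<alpha> W p r z)"
  unfolding Z3_def sum_UNIV_pairs[of "tilt \<alpha> W p r"] by (simp add: tilt_def)

lemma distr_q_star:
  assumes "channel W" "distr p" "rev_channel r" "0 < Z3 \<alpha> W p r"
  shows "distr (q_star \<alpha> W p r)"
  using assms tilt_nonneg[OF assms(1-3)]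
  unfolding distr_def q_star_eq_tilt by (simp add: Z3_eq_sum_tilt flip: sum_divide_distrib)

lemma F_S3_eq_KL_tilt:
  assumes "1 < \<alpha>" "channel W" "distr p" "distr q" "rev_channel r" "abs_cont W p q r"
  shows "F_S3 \<alpha> W p q r = ereal (\<alpha> / (1 - \<alpha>) * KL_real q (tilt \<alpha> W p r))"
proof -
  have pointwise: "\<alpha> / (1 - \<alpha>) * (q (x, y) * ln (q (x, y) / (xmarg q x * W x y)))
      + q (x, y) * ln (r y x / xmarg q x) + 1 / (1 - \<alpha>) * (q (x, y) * ln (xmarg q x / p x))
      = \<alpha> / (1 - \<alpha>) * (q (x, y) * ln (q (x, y) / tilt \<alpha> W p r (x, y)))" for x y
  proof (cases "q (x, y) = 0")
    case False
    then have "0 < q (x, y)" "0 < xmarg q x" "0 < p x" "0 < W x y" "0 < r y x"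
      using assms(2-6) xmarg_pos[OF assms(4) False]
      unfolding abs_cont_def channel_def rev_channel_def distr_def by (auto simp: less_le)
    then have "\<alpha> / (1 - \<alpha>) * ln (q (x, y) / (xmarg q x * W x y)) + ln (r y x / xmarg q x)
        + 1 / (1 - \<alpha>) * ln (xmarg q x / p x) = \<alpha> / (1 - \<alpha>) * ln (q (x, y) / tilt \<alpha> W p r (x, y))"
      using assms(1) unfolding tilt_def prod.case by (intro ln_tilt_identity) auto
    then have "q (x, y) * (\<alpha> / (1 - \<alpha>) * ln (q (x, y) / (xmarg q x * W x y)) + ln (r y x / xmarg q x)
        + 1 / (1 - \<alpha>) * ln (xmarg q x / p x))
        = q (x, y) * (\<alpha> / (1 - \<alpha>) * ln (q (x, y) / tilt \<alpha> W p r (x, y)))"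
      by simp
    then show ?thesis by (simp only: distrib_left mult.left_commute)
  qed simp
  show ?thesis
    unfolding F_S3_eq_real[OF assms(4,6)] KL_real_xmarg
    unfolding KL_real_def exp_log_real_def sum_distrib_left sum.distrib[symmetric]
    using pointwise by (intro arg_cong[where f = ereal] sum.cong) auto
qed

lemma F_S3_le_q_star:
  assumes "1 < \<alpha>" "channel W" "distr p" "distr q" "rev_channel r" "0 < Z3 \<alpha> W p r"
  shows "F_S3 \<alpha> W p q r \<le> F_S3 \<alpha> W p (q_star \<alpha> W p r) r"
proof (cases "abs_cont W p q r")
  case True
  define Z where "Z = Z3 \<alpha> W p r"
  have dq: "distr (q_star \<alpha> W p r)" using assms(2,3,5,6) by (rule distr_q_star)
  have supp: "q' z \<noteq> 0 \<Longrightarrow> 0 < q' z \<and> 0 < tilt \<alpha> W p r z"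
    if "distr q'" "abs_cont W p q' r" for q' z
    using that tilt_nonneg[OF assms(2,3,5)] unfolding abs_cont_def distr_def
    by (cases z) (auto simp: less_le tilt_eq_0_iff)
  have F_eq: "F_S3 \<alpha> W p q' r = ereal (\<alpha> / (1 - \<alpha>) * (KL_real q' (q_star \<alpha> W p r) - ln Z))"
    if "distr q'" "abs_cont W p q' r" for q'
    using that assms supp[OF that] KL_real_divide[of Z q' "tilt \<alpha> W p r"]
    unfolding F_S3_eq_KL_tilt[OF assms(1-3) that(1) assms(5) that(2)] q_star_eq_tilt Z_def
    by (simp add: distr_def)
  have abs_cont_q_star: "abs_cont W p (q_star \<alpha> W p r) r"
    using assms(6) unfolding abs_cont_def q_star_eq_tilt by (simp add: tilt_eq_0_iff)
  have "0 \<le> KL_real q (q_star \<alpha> W p r)"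
  proof (rule KL_real_nonneg[OF assms(4) dq])
    show "q z = 0" if "q_star \<alpha> W p r z = 0" for z
      using that supp[OF assms(4) True, of z] assms(6) by (auto simp: q_star_eq_tilt)
  qed
  then have "\<alpha> / (1 - \<alpha>) * (KL_real q (q_star \<alpha> W p r) - ln Z)
      \<le> \<alpha> / (1 - \<alpha>) * (KL_real (q_star \<alpha> W p r) (q_star \<alpha> W p r) - ln Z)"
    using assms(1) by (intro mult_left_mono_neg) (auto simp: KL_real_self intro!: divide_nonneg_neg)
  then show ?thesis
    unfolding F_eq[OF assms(4) True] F_eq[OF dq abs_cont_q_star] ereal_less_eq .
qed (simp add: F_S3_eq_MInfty assms)

theorem proposition5:
  fixes \<alpha> :: real
    and W :: "'x::finite \<Rightarrow> 'y::finite \<Rightarrow> real"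
  assumes "1 < \<alpha>"
    and "channel W"
  shows
    "(\<forall>p q r rstar. distr p \<longrightarrow> distr q \<longrightarrow> rev_channel r \<longrightarrow> rev_channel rstar \<longrightarrow>
        (\<forall>x y. 0 < ymarg q y \<longrightarrow> rstar y x = q (x, y) / ymarg q y) \<longrightarrow>
        F_S3 \<alpha> W p q r \<le> F_S3 \<alpha> W p q rstar)
   \<and> (\<forall>p q r. distr p \<longrightarrow> distr q \<longrightarrow> rev_channel r \<longrightarrow>
        distr (xmarg q) \<and> F_S3 \<alpha> W p q r \<le> F_S3 \<alpha> W (xmarg q) q r)
   \<and> (\<forall>p q r. distr p \<longrightarrow> distr q \<longrightarrow> rev_channel r \<longrightarrow> 0 < Z3 \<alpha> W p r \<longrightarrow>
        distr (q_star \<alpha> W p r) \<and> F_S3 \<alpha> W p q r \<le> F_S3 \<alpha> W p (q_star \<alpha> W p r) r)"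
  using assms
  by (auto intro: F_S3_le_posterior F_S3_le_xmarg F_S3_le_q_star distr_xmarg distr_q_star)

end
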